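(* There exist constants $C_1,C_2>0$ (depending only on $r$) such that for all $x\ge1$, $$\limsup_{N\to\infty}\sum_{k=1}^N P\big(R_{k,N}>xN^{1-r}\big)\le C_1e^{-C_2x^{1/r}}.$$
   Context: Fix $r\in(0,1)$. Consider the following multitype Yule process. At time $0$ a single individual of type $1$ is born. No individual ever dies, and each individual independently gives birth at rate $1$. When a new individual is born, independently of everything else, with probability $1-r$ it has the same type as its parent and with probability $r$ it has a new type different from all previously observed types. Individuals are numbered in order of birth (the initial one is the 1st); if the $k$-th individual born has a type different from its parent, that type is called type $k$. Let $T_N$ be the time the population size reaches $N$, and $R_{k,N}$ the number of type-$k$ individuals at time $T_N$. *)

theory Defs
  imports "HOL-Probability.Probability"
begin

text \<open>Embedded jump chain of the multitype Yule process.  A state is the list of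
types of the individuals in birth order (the i-th entry, 0-based, is the type of
the (i+1)-th individual).  Types are named by the (1-based) birth index of the
individual that founded them; the initial individual has type 1.
At each birth the parent is uniform among the current individuals (all birth
rates equal 1); with probability r the newborn (individual number length xs + 1)
gets the new type length xs + 1, otherwise the parent's type.\<close>

definition yule_step :: "real \<Rightarrow> nat list \<Rightarrow> nat list pmf" where
  "yule_step r xs =
     bind_pmf (pmf_of_set {..<length xs}) (\<lambda>p.
     bind_pmf (bernoulli_pmf r) (\<lambda>b.
     return_pmf (xs @ [if b then Suc (length xs) else xs ! p])))"

text \<open>Law of the population (list of types) at time T_N, the time the population
size reaches N (N \<ge> 1).\<close>
fun yule_state :: "real \<Rightarrow> nat \<Rightarrow> nat list pmf" where
  "yule_state r 0 = return_pmf []"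
| "yule_state r (Suc 0) = return_pmf [1]"
| "yule_state r (Suc (Suc n)) = bind_pmf (yule_state r (Suc n)) (yule_step r)"

definition type_count :: "nat \<Rightarrow> nat list \<Rightarrow> nat" where
  "type_count k xs = length (filter (\<lambda>t. t = k) xs)"

end

theory Submission
  imports Defs
begin

text \<open>
  Rising factorial moments c^(m) = c (c + 1) ... (c + m - 1) of the type counts evolve
  multiplicatively: a type of size c among N individuals grows with probability (1 - r) c / N,
  and c ((c + 1)^(m) - c^(m)) = m c^(m), so each birth multiplies E[R_k^(m)] by
  1 + (1 - r) m / N, while a new type starts with moment r m!.  Hence
  E[R_{k,N}^(m)] <= m! prod_{n=k}^{N-1} (1 + s/n) with s = (1 - r) m.  Markov's inequality
  (R^(m) >= R^m) bounds each probability; for s >= 2 the products summed over k telescope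
  to at most twice the one for k = 1, and m! times that product is at most (2m)^m (N/m)^s.
  At the threshold x N^(1-r) the sum is thus at most 2 (2 m^r / x)^m for all N > m, and the
  choice m ~ (x / 2e)^(1/r) gives the bound C1 exp (- C2 x^(1/r)).
\<close>

lemma pochhammer_plus_one_diff:
  "(c :: 'a :: comm_ring_1) * (pochhammer (c + 1) m - pochhammer c m) = of_nat m * pochhammer c m"
proof -
  have "c * pochhammer (c + 1) m = pochhammer c m * (c + of_nat m)"
    by (metis pochhammer_rec pochhammer_Suc)
  then show ?thesis
    by (simp add: algebra_simps)
qed

lemma power_le_pochhammer:
  fixes c :: "'a :: linordered_semidom"
  assumes "0 \<le> c"
  shows "c ^ m \<le> pochhammer c m"
proof -
  have "(\<Prod>i\<in>{0..<m}. c) \<le> pochhammer c m"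
    unfolding pochhammer_prod using assms by (intro prod_mono) auto
  then show ?thesis
    by simp
qed

lemma pochhammer_le_power:
  fixes c :: "'a :: linordered_semidom"
  assumes "0 \<le> c"
  shows "pochhammer (c + 1) m \<le> (c + of_nat m) ^ m"
proof -
  have "pochhammer (c + 1) m \<le> (\<Prod>i\<in>{0..<m}. c + of_nat m)"
    unfolding pochhammer_prod using assms
    by (intro prod_mono) (auto simp: add.assoc simp flip: of_nat_Suc intro!: add_left_mono)
  then show ?thesis
    by simp
qed

lemma expectation_bind_pmf_finite:
  fixes h :: "'b \<Rightarrow> real"
  assumes "finite (set_pmf p)" "\<And>x. x \<in> set_pmf p \<Longrightarrow> finite (set_pmf (f x))"
  shows "measure_pmf.expectation (bind_pmf p f) h =
         measure_pmf.expectation p (\<lambda>x. measure_pmf.expectation (f x) h)"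
  using assms
  by (simp add: pmf_expectation_bind[OF assms(1,2) order_refl] integral_measure_pmf[OF assms(1)])

lemma prob_gt_le_pochhammer_moment:
  fixes X :: "'a \<Rightarrow> nat"
  assumes "finite (set_pmf p)" "0 < y"
  shows "measure_pmf.prob p {x. y < real (X x)}
         \<le> measure_pmf.expectation p (\<lambda>x. pochhammer (real (X x)) m) / y ^ m"
proof -
  have "y ^ m \<le> pochhammer (real (X x)) m" if "y < real (X x)" for x
    using assms(2) that power_mono[of y "real (X x)" m] power_le_pochhammer[of "real (X x)" m]
    by simp
  then have "{x. y < real (X x)} \<subseteq> {x. y ^ m \<le> pochhammer (real (X x)) m}"
    by blast
  then have "measure_pmf.prob p {x. y < real (X x)}
      \<le> measure_pmf.prob p {x \<in> space p. y ^ m \<le> pochhammer (real (X x)) m}"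
    by (intro measure_pmf.finite_measure_mono) auto
  also have "\<dots> \<le> measure_pmf.expectation p (\<lambda>x. pochhammer (real (X x)) m) / y ^ m"
    using assms by (intro integral_Markov_inequality_measure[where A = UNIV])
      (auto simp: integrable_measure_pmf_finite pochhammer_of_nat)
  finally show ?thesis .
qed

definition moment_growth :: "real \<Rightarrow> nat \<Rightarrow> nat \<Rightarrow> real" where
  "moment_growth s k N = (\<Prod>n = k..<N. 1 + s / real n)"

lemma moment_growth_same [simp]: "moment_growth s k k = 1"
  by (simp add: moment_growth_def)

lemma moment_growth_Suc:
  "k \<le> N \<Longrightarrow> moment_growth s k (Suc N) = moment_growth s k N * (1 + s / N)"
  by (simp add: moment_growth_def prod.atLeastLessThan_Suc)

lemma moment_growth_nonneg: "0 \<le> s \<Longrightarrow> 0 \<le> moment_growth s k N"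
  unfolding moment_growth_def by (intro prod_nonneg) auto

lemma moment_growth_split:
  "k \<le> j \<Longrightarrow> j \<le> N \<Longrightarrow> moment_growth s k N = moment_growth s k j * moment_growth s j N"
  unfolding moment_growth_def by (simp add: prod.atLeastLessThan_concat)

lemma sum_moment_growth:
  assumes "N \<ge> 1"
  shows "(s - 1) * (\<Sum>k = 1..N. moment_growth s k N) = s * moment_growth s 1 N - N"
  using assms
proof (induction N rule: nat_induct_at_least)
  case (Suc N)
  define S where "S = (\<Sum>k = 1..N. moment_growth s k N)"
  have "(s - 1) * (\<Sum>k = 1..Suc N. moment_growth s k (Suc N)) = (s - 1) * (S * (1 + s / N) + 1)"
    by (simp add: S_def moment_growth_Suc sum_distrib_right)
  also have "\<dots> = ((s - 1) * S) * (1 + s / N) + (s - 1)"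
    by (simp add: ring_distribs)
  also have "\<dots> = (s * moment_growth s 1 N - N) * (1 + s / N) + (s - 1)"
    using Suc.IH by (simp add: S_def)
  also have "\<dots> = s * moment_growth s 1 (Suc N) - Suc N"
    using Suc.hyps by (simp add: moment_growth_Suc field_simps)
  finally show ?case .
qed simp

lemma sum_moment_growth_le:
  assumes "2 \<le> s" "N \<ge> 1"
  shows "(\<Sum>k = 1..N. moment_growth s k N) \<le> 2 * moment_growth s 1 N"
proof -
  have "s * moment_growth s 1 N \<le> (2 * (s - 1)) * moment_growth s 1 N"
    using assms(1) moment_growth_nonneg[of s 1 N] by (intro mult_right_mono) auto
  then have "(s - 1) * (\<Sum>k = 1..N. moment_growth s k N) \<le> (s - 1) * (2 * moment_growth s 1 N)"
    using sum_moment_growth[OF assms(2), of s] by (simp add: algebra_simps)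
  then show ?thesis
    using assms(1) by simp
qed

lemma fact_mult_moment_growth: "fact j * moment_growth s 1 (Suc j) = pochhammer (s + 1) j"
proof (induction j)
  case (Suc j)
  have "fact (Suc j) * moment_growth s 1 (Suc (Suc j))
      = fact j * moment_growth s 1 (Suc j) * (s + 1 + j)"
    by (simp add: moment_growth_Suc field_simps)
  also have "\<dots> = pochhammer (s + 1) j * (s + 1 + j)"
    using Suc.IH by simp
  finally show ?case
    by (simp add: pochhammer_Suc)
qed simp

lemma one_plus_div_le_powr:
  fixes n s :: real
  assumes "2 \<le> n" "0 \<le> s"
  shows "1 + s / n \<le> (n / (n - 1)) powr s"
proof -
  have "1 / n \<le> ln (n / (n - 1))"
    using ln_le_minus_one[of "(n - 1) / n"] assms(1) by (simp add: ln_div field_simps)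
  then have "s / n \<le> s * ln (n / (n - 1))"
    using mult_left_mono[OF _ assms(2)] by (simp add: divide_inverse)
  then have "exp (s / n) \<le> (n / (n - 1)) powr s"
    using assms(1) by (simp add: powr_def mult.commute)
  then show ?thesis
    using exp_ge_add_one_self[of "s / n"] by linarith
qed

lemma moment_growth_le_powr:
  assumes "1 \<le> k" "0 \<le> s" "Suc k \<le> N"
  shows "moment_growth s (Suc k) N \<le> ((real N - 1) / real k) powr s"
  using assms(3)
proof (induction N rule: nat_induct_at_least)
  case (Suc N)
  have "moment_growth s (Suc k) (Suc N) = moment_growth s (Suc k) N * (1 + s / N)"
    using Suc by (simp add: moment_growth_Suc)
  also have "\<dots> \<le> ((N - 1) / k) powr s * (N / (N - 1)) powr s"
    using Suc assms one_plus_div_le_powr[of N s]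
    by (intro mult_mono) (auto simp: moment_growth_nonneg)
  also have "\<dots> = (N / k) powr s"
    using Suc assms by (simp add: powr_mult[symmetric])
  finally show ?case
    by simp
qed (use assms in simp)

lemma fact_mult_moment_growth_le:
  fixes s :: real
  assumes "1 \<le> m" "0 \<le> s" "s \<le> m" "Suc m \<le> N"
  shows "fact m * moment_growth s 1 N \<le> (2 * real m) ^ m * (real N / real m) powr s"
proof -
  have "fact m * moment_growth s 1 (Suc m) \<le> (s + m) ^ m"
    unfolding fact_mult_moment_growth by (rule pochhammer_le_power[OF assms(2)])
  also have "\<dots> \<le> (2 * real m) ^ m"
    using assms by (intro power_mono) auto
  finally have head: "fact m * moment_growth s 1 (Suc m) \<le> (2 * real m) ^ m" .
  have "moment_growth s (Suc m) N \<le> ((N - 1) / m) powr s"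
    using moment_growth_le_powr assms by simp
  also have "\<dots> \<le> (N / m) powr s"
    using assms by (intro powr_mono2 divide_right_mono) auto
  finally have tail: "moment_growth s (Suc m) N \<le> (N / m) powr s" .
  have "fact m * moment_growth s 1 N = fact m * moment_growth s 1 (Suc m) * moment_growth s (Suc m) N"
    using moment_growth_split[of 1 "Suc m" N s] assms by simp
  also have "\<dots> \<le> (2 * real m) ^ m * (N / m) powr s"
    using head tail assms by (intro mult_mono) (auto simp: moment_growth_nonneg)
  finally show ?thesis .
qed

lemma set_pmf_yule_state:
  assumes "N \<ge> 1" "xs \<in> set_pmf (yule_state r N)"
  shows "length xs = N \<and> set xs \<subseteq> {1..N}"
  using assms
proof (induction r N arbitrary: xs rule: yule_state.induct)
  case (3 r n)
  then obtain ys where ys: "ys \<in> set_pmf (yule_state r (Suc n))" "xs \<in> set_pmf (yule_step r ys)"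
    by auto
  with "3.IH" have ys_shape: "length ys = Suc n" "set ys \<subseteq> {1..Suc n}"
    by auto
  then obtain p b where "p < length ys" "xs = ys @ [if b then Suc (length ys) else ys ! p]"
    using ys(2) by (auto simp: yule_step_def lessThan_empty_iff)
  moreover have "ys ! p \<in> {1..Suc n}"
    using ys_shape nth_mem[OF \<open>p < length ys\<close>] by blast
  ultimately show ?case
    using ys_shape by auto
qed simp_all

lemma finite_set_pmf_yule_state:
  assumes "N \<ge> 1"
  shows "finite (set_pmf (yule_state r N))"
proof (rule finite_subset)
  show "set_pmf (yule_state r N) \<subseteq> {xs. set xs \<subseteq> {1..N} \<and> length xs = N}"
    using set_pmf_yule_state[OF assms] by blast
qed (simp add: finite_lists_length_eq)

lemma finite_set_pmf_yule_step: "xs \<noteq> [] \<Longrightarrow> finite (set_pmf (yule_step r xs))"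
  by (simp add: yule_step_def set_pmf_of_set lessThan_empty_iff)

lemma expectation_yule_step:
  fixes g :: "nat list \<Rightarrow> real"
  assumes "xs \<noteq> []" "0 \<le> r" "r \<le> 1"
  shows "measure_pmf.expectation (yule_step r xs) g =
     r * g (xs @ [Suc (length xs)]) + (1 - r) * (\<Sum>p<length xs. g (xs @ [xs ! p])) / length xs"
proof -
  have "measure_pmf.expectation (yule_step r xs) g =
      (\<Sum>p<length xs. r * g (xs @ [Suc (length xs)]) + (1 - r) * g (xs @ [xs ! p])) / length xs"
    using assms by (simp add: yule_step_def map_pmf_def[symmetric] pmf_expectation_bind_pmf_of_set
        lessThan_empty_iff sum_divide_distrib sum_distrib_left divide_inverse_commute mult_ac)
  also have "\<dots> = r * g (xs @ [Suc (length xs)])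
      + (1 - r) * (\<Sum>p<length xs. g (xs @ [xs ! p])) / length xs"
    using assms by (simp add: sum.distrib sum_distrib_left add_divide_distrib)
  finally show ?thesis .
qed

lemma expectation_yule_state_Suc:
  fixes h :: "nat list \<Rightarrow> real"
  assumes "N \<ge> 1"
  shows "measure_pmf.expectation (yule_state r (Suc N)) h =
         measure_pmf.expectation (yule_state r N) (\<lambda>xs. measure_pmf.expectation (yule_step r xs) h)"
proof -
  have "yule_state r (Suc N) = bind_pmf (yule_state r N) (yule_step r)"
    using assms by (cases N) auto
  moreover have "finite (set_pmf (yule_step r xs))" if "xs \<in> set_pmf (yule_state r N)" for xs
    using set_pmf_yule_state[OF assms that] assms by (intro finite_set_pmf_yule_step) auto
  ultimately show ?thesis
    using finite_set_pmf_yule_state[OF assms] by (simp add: expectation_bind_pmf_finite)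
qed

lemma type_count_snoc: "type_count k (xs @ [t]) = type_count k xs + (if t = k then 1 else 0)"
  by (simp add: type_count_def)

lemma card_type_positions: "card ({..<length xs} \<inter> {p. xs ! p = k}) = type_count k xs"
  unfolding type_count_def by (simp add: length_filter_conv_card Int_def)

lemma expectation_yule_step_pochhammer_old:
  assumes "xs \<noteq> []" "0 \<le> r" "r \<le> 1" "k \<noteq> Suc (length xs)"
  shows "measure_pmf.expectation (yule_step r xs) (\<lambda>ys. pochhammer (real (type_count k ys)) m)
       = pochhammer (real (type_count k xs)) m * (1 + (1 - r) * m / length xs)"
proof -
  define N where "N = length xs"
  define c where "c = real (type_count k xs)"
  define P where "P = (\<lambda>z::real. pochhammer z m)"
  have "(\<Sum>p<N. P (type_count k (xs @ [xs ! p])))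
        = (\<Sum>p<N. P c + (if xs ! p = k then P (c + 1) - P c else 0))"
    by (intro sum.cong) (auto simp: type_count_snoc c_def add.commute)
  also have "\<dots> = N * P c + (\<Sum>p\<in>{..<N} \<inter> {p. xs ! p = k}. P (c + 1) - P c)"
    by (simp add: sum.distrib sum.If_cases)
  also have "\<dots> = (N + m) * P c"
    using card_type_positions[of xs k] pochhammer_plus_one_diff[of c m]
    by (simp add: N_def c_def P_def algebra_simps)
  finally have sum_old: "(\<Sum>p<N. P (type_count k (xs @ [xs ! p]))) = (N + m) * P c" .
  have "P (type_count k (xs @ [Suc N])) = P c"
    using assms(4) by (simp add: type_count_snoc N_def c_def)
  then have "measure_pmf.expectation (yule_step r xs) (\<lambda>ys. P (type_count k ys))
        = r * P c + (1 - r) * ((N + m) * P c) / N"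
    using expectation_yule_step[OF assms(1-3)] sum_old by (simp add: N_def)
  also have "\<dots> = P c * (1 + (1 - r) * m / N)"
    using assms(1) by (simp add: N_def field_simps)
  finally show ?thesis
    by (simp add: N_def P_def c_def)
qed

lemma expectation_yule_step_pochhammer_new:
  assumes "xs \<noteq> []" "0 \<le> r" "r \<le> 1" "Suc (length xs) \<notin> set xs" "m \<ge> 1"
  shows "measure_pmf.expectation (yule_step r xs)
           (\<lambda>ys. pochhammer (real (type_count (Suc (length xs)) ys)) m) = r * fact m"
proof -
  have "type_count (Suc (length xs)) xs = 0"
    using assms(4) unfolding type_count_def by (auto simp: filter_empty_conv)
  moreover have "xs ! p \<noteq> Suc (length xs)" if "p < length xs" for p
    using assms(4) nth_mem[OF that] by auto
  ultimately show ?thesis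
    using assms by (simp add: expectation_yule_step type_count_snoc pochhammer_0_left pochhammer_fact)
qed

lemma expectation_pochhammer_type_count_le:
  assumes "0 \<le> r" "r \<le> 1" "m \<ge> 1" "1 \<le> k" "k \<le> N"
  shows "measure_pmf.expectation (yule_state r N) (\<lambda>xs. pochhammer (real (type_count k xs)) m)
         \<le> fact m * moment_growth ((1 - r) * m) k N"
proof -
  have "1 \<le> N"
    using assms(4,5) by linarith
  then show ?thesis
    using assms(4,5)
  proof (induction N arbitrary: k rule: nat_induct_at_least)
    case base
    then show ?case
      by (simp add: type_count_def pochhammer_fact)
  next
    case (Suc N)
    let ?s = "(1 - r) * m"
    let ?M = "\<lambda>k xs. pochhammer (real (type_count k xs)) m"
    have support: "xs \<noteq> [] \<and> length xs = N \<and> Suc N \<notin> set xs"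
      if "xs \<in> set_pmf (yule_state r N)" for xs
      using set_pmf_yule_state[OF Suc.hyps that] Suc.hyps by auto
    show ?case
    proof (cases "k \<le> N")
      case True
      have "measure_pmf.expectation (yule_state r (Suc N)) (?M k)
          = measure_pmf.expectation (yule_state r N) (\<lambda>xs. ?M k xs * (1 + ?s / N))"
        unfolding expectation_yule_state_Suc[OF Suc.hyps] using support assms(1,2) True
        by (intro integral_cong_AE) (auto simp: AE_measure_pmf_iff expectation_yule_step_pochhammer_old)
      also have "\<dots> = measure_pmf.expectation (yule_state r N) (?M k) * (1 + ?s / N)"
        by simp
      also have "\<dots> \<le> fact m * moment_growth ?s k N * (1 + ?s / N)"
        using Suc.IH[OF Suc.prems(1) True] assms(2) by (intro mult_right_mono) auto
      also have "\<dots> = fact m * moment_growth ?s k (Suc N)"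
        using True by (simp add: moment_growth_Suc)
      finally show ?thesis .
    next
      case False
      then have "k = Suc N"
        using Suc.prems by simp
      have "measure_pmf.expectation (yule_step r xs) (?M (Suc N)) = r * fact m"
        if "xs \<in> set_pmf (yule_state r N)" for xs
        using support[OF that] expectation_yule_step_pochhammer_new[of xs r m] assms(1-3) by auto
      then have "measure_pmf.expectation (yule_state r (Suc N)) (?M k)
          = measure_pmf.expectation (yule_state r N) (\<lambda>_. r * fact m)"
        unfolding expectation_yule_state_Suc[OF Suc.hyps] \<open>k = Suc N\<close>
        by (intro integral_cong_AE) (auto simp: AE_measure_pmf_iff)
      then show ?thesis
        using \<open>k = Suc N\<close> assms(2) by simp
    qed
  qed
qed

lemma sum_prob_type_count_gt_le:
  assumes "0 \<le> r" "r \<le> 1" "2 \<le> (1 - r) * m" "0 < y" "1 \<le> N"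
  shows "(\<Sum>k = 1..N. measure_pmf.prob (yule_state r N) {xs. real (type_count k xs) > y})
         \<le> 2 * fact m * moment_growth ((1 - r) * m) 1 N / y ^ m"
proof -
  let ?s = "(1 - r) * m"
  have "m \<ge> 1"
    using assms(3) by (cases m) auto
  have "(\<Sum>k = 1..N. measure_pmf.prob (yule_state r N) {xs. real (type_count k xs) > y})
      \<le> (\<Sum>k = 1..N. fact m * moment_growth ?s k N / y ^ m)"
  proof (intro sum_mono)
    fix k assume "k \<in> {1..N}"
    then have "measure_pmf.expectation (yule_state r N) (\<lambda>xs. pochhammer (real (type_count k xs)) m) / y ^ m
        \<le> fact m * moment_growth ?s k N / y ^ m"
      using expectation_pochhammer_type_count_le[OF assms(1,2) \<open>m \<ge> 1\<close>] assms(4)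
      by (intro divide_right_mono) auto
    with prob_gt_le_pochhammer_moment[OF finite_set_pmf_yule_state[OF assms(5)] assms(4)]
    show "measure_pmf.prob (yule_state r N) {xs. real (type_count k xs) > y}
        \<le> fact m * moment_growth ?s k N / y ^ m"
      by (rule order_trans)
  qed
  also have "\<dots> = fact m * (\<Sum>k = 1..N. moment_growth ?s k N) / y ^ m"
    by (simp add: sum_divide_distrib sum_distrib_left)
  also have "\<dots> \<le> fact m * (2 * moment_growth ?s 1 N) / y ^ m"
    using sum_moment_growth_le[OF assms(3,5)] assms(4)
    by (intro divide_right_mono mult_left_mono) auto
  finally show ?thesis
    by (simp add: ac_simps)
qed

lemma sum_prob_type_count_gt_scaled_le:
  fixes r x :: real
  assumes "0 < r" "r < 1" "2 \<le> (1 - r) * m" "0 < x" "Suc m \<le> N"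
  shows "(\<Sum>k = 1..N. measure_pmf.prob (yule_state r N)
            {xs. real (type_count k xs) > x * real N powr (1 - r)})
         \<le> 2 * (2 * real m powr r / x) ^ m"
proof -
  define s where "s = (1 - r) * m"
  define y where "y = x * real N powr (1 - r)"
  have "m \<ge> 1"
    using assms(3) by (cases m) auto
  have "real N > 0" "real m > 0"
    using assms(5) \<open>m \<ge> 1\<close> by auto
  then have "y > 0"
    using assms(4) by (simp add: y_def)
  have "0 \<le> s" "s \<le> m"
    using assms(1,2) by (auto simp: s_def mult_left_le_one_le)
  have "(\<Sum>k = 1..N. measure_pmf.prob (yule_state r N) {xs. real (type_count k xs) > y})
      \<le> 2 * (fact m * moment_growth s 1 N) / y ^ m"
    using sum_prob_type_count_gt_le[of r m y N] assms \<open>y > 0\<close> by (simp add: s_def mult.assoc)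
  also have "\<dots> \<le> 2 * ((2 * real m) ^ m * (N / m) powr s) / y ^ m"
    using fact_mult_moment_growth_le[OF \<open>m \<ge> 1\<close> \<open>0 \<le> s\<close> \<open>s \<le> m\<close> assms(5)] \<open>y > 0\<close>
    by (intro divide_right_mono mult_left_mono) auto
  also have "\<dots> = 2 * (2 * real m powr r / x) ^ m"
  proof -
    have "y ^ m = x ^ m * real N powr s"
      unfolding y_def s_def using \<open>real N > 0\<close>
      by (simp add: power_mult_distrib powr_realpow[symmetric] powr_powr)
    moreover have "real m ^ m = real m powr s * (real m powr r) ^ m"
      using \<open>real m > 0\<close>
      by (simp add: s_def powr_realpow[symmetric] powr_powr powr_add[symmetric] algebra_simps)
    ultimately show ?thesis
      using \<open>real m > 0\<close> \<open>real N > 0\<close> assms(4)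
      by (simp add: powr_divide power_divide power_mult_distrib field_simps)
  qed
  finally show ?thesis
    unfolding y_def .
qed

lemma limsup_sum_prob_type_count_gt_le:
  fixes r x :: real
  assumes "0 < r" "r < 1" "2 \<le> (1 - r) * m" "0 < x"
  shows "limsup (\<lambda>N. ereal (\<Sum>k = 1..N. measure_pmf.prob (yule_state r N)
            {xs. real (type_count k xs) > x * real N powr (1 - r)}))
         \<le> ereal (2 * (2 * real m powr r / x) ^ m)"
  by (rule Limsup_bounded)
    (use sum_prob_type_count_gt_scaled_le[OF assms] in \<open>auto simp: eventually_sequentially\<close>)

lemma moment_order_floor_bound:
  fixes r t x :: real
  assumes "0 < r" "0 < x" "0 \<le> t" "t powr r = x / (2 * exp 1)"
  shows "2 * (2 * real (nat \<lfloor>t\<rfloor>) powr r / x) ^ nat \<lfloor>t\<rfloor> \<le> 2 * exp 1 * exp (- t)"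
proof -
  define m where "m = nat \<lfloor>t\<rfloor>"
  have "real m \<le> t" "t < real m + 1"
    unfolding m_def using assms(3) by linarith+
  then have "real m powr r \<le> x / (2 * exp 1)"
    using assms by (metis powr_mono2 less_imp_le of_nat_0_le_iff)
  then have "2 * real m powr r / x \<le> exp (- 1)"
    using assms(2) by (simp add: field_simps exp_minus)
  then have "2 * (2 * real m powr r / x) ^ m \<le> 2 * exp (- 1) ^ m"
    using assms(2) by (intro mult_left_mono power_mono) auto
  also have "\<dots> = 2 * exp 1 * exp (- (m + 1))"
    by (simp add: exp_of_nat_mult[symmetric] exp_diff exp_minus field_simps)
  also have "\<dots> \<le> 2 * exp 1 * exp (- t)"
    using \<open>t < real m + 1\<close> by simp
  finally show ?thesis
    unfolding m_def .
qed

lemma exists_moment_order_exp_bound: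
  fixes r :: real and M :: nat
  assumes "0 < r"
  shows "\<exists>C1 > 0. \<exists>C2 > 0. \<forall>x \<ge> 1. \<exists>m \<ge> M.
           2 * (2 * real m powr r / x) ^ m \<le> C1 * exp (- C2 * x powr (1 / r))"
proof -
  define D where "D = 2 * (2 * real M powr r) ^ M"
  define C1 where "C1 = 2 * exp 1 + D * exp M"
  define C2 where "C2 = (2 * exp 1) powr (- 1 / r)"
  have "D \<ge> 0"
    by (simp add: D_def)
  have "\<exists>m \<ge> M. 2 * (2 * real m powr r / x) ^ m \<le> C1 * exp (- C2 * x powr (1 / r))"
    if "x \<ge> 1" for x
  proof -
    define t where "t = (x / (2 * exp 1)) powr (1 / r)"
    have "C2 * x powr (1 / r) = t"
      using that by (simp add: t_def C2_def powr_divide powr_minus_divide)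
    moreover have "\<exists>m \<ge> M. 2 * (2 * real m powr r / x) ^ m \<le> C1 * exp (- t)"
    proof (cases "M \<le> nat \<lfloor>t\<rfloor>")
      case True
      have "t powr r = x / (2 * exp 1)"
        unfolding t_def using that assms by (simp add: powr_powr)
      then have "2 * (2 * real (nat \<lfloor>t\<rfloor>) powr r / x) ^ nat \<lfloor>t\<rfloor> \<le> 2 * exp 1 * exp (- t)"
        using that assms by (intro moment_order_floor_bound) (auto simp: t_def)
      also have "\<dots> \<le> C1 * exp (- t)"
        using \<open>D \<ge> 0\<close> by (simp add: C1_def)
      finally show ?thesis
        using True by blast
    next
      case False
      then have "t < M"
        by linarith
      have "2 * (2 * real M powr r / x) ^ M \<le> D"
        unfolding D_def using that
        by (intro mult_left_mono power_mono) (auto simp: divide_le_eq mult_le_cancel_left1)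
      also have "\<dots> \<le> D * exp M * exp (- t)"
        using \<open>t < M\<close> \<open>D \<ge> 0\<close> by (simp add: exp_minus field_simps mult_left_mono)
      also have "\<dots> \<le> C1 * exp (- t)"
        unfolding C1_def by (intro mult_right_mono) auto
      finally show ?thesis
        by blast
    qed
    ultimately show ?thesis
      by simp
  qed
  moreover have "C1 > 0" "C2 > 0"
    using \<open>D \<ge> 0\<close> by (simp_all add: C1_def C2_def add_pos_nonneg)
  ultimately show ?thesis
    by blast
qed

theorem proposition1p5:
  fixes r :: real
  assumes "0 < r" and "r < 1"
  shows "\<exists>C1 > 0. \<exists>C2 > 0. \<forall>x :: real. x \<ge> 1 \<longrightarrow>
           limsup (\<lambda>N. ereal (\<Sum>k = 1..N.
              measure_pmf.prob (yule_state r N)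
                {xs. real (type_count k xs) > x * real N powr (1 - r)}))
           \<le> ereal (C1 * exp (- C2 * x powr (1 / r)))"
proof -
  define M where "M = nat \<lceil>2 / (1 - r)\<rceil>"
  have M: "2 \<le> (1 - r) * m" if "M \<le> m" for m
  proof -
    have "2 / (1 - r) \<le> m"
      using that unfolding M_def by linarith
    then show ?thesis
      using assms by (simp add: field_simps)
  qed
  obtain C1 C2 where "C1 > 0" "C2 > 0" and bound:
    "\<And>x. x \<ge> 1 \<Longrightarrow>
      \<exists>m \<ge> M. 2 * (2 * real m powr r / x) ^ m \<le> C1 * exp (- C2 * x powr (1 / r))"
    using exists_moment_order_exp_bound[OF assms(1), of M] by blast
  have "limsup (\<lambda>N. ereal (\<Sum>k = 1..N. measure_pmf.prob (yule_state r N)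
            {xs. real (type_count k xs) > x * real N powr (1 - r)}))
        \<le> ereal (C1 * exp (- C2 * x powr (1 / r)))" if x: "x \<ge> 1" for x
  proof -
    obtain m where "m \<ge> M"
      and m: "2 * (2 * real m powr r / x) ^ m \<le> C1 * exp (- C2 * x powr (1 / r))"
      using bound[OF x] by blast
    have "0 < x"
      using x by simp
    with limsup_sum_prob_type_count_gt_le[OF assms M[OF \<open>m \<ge> M\<close>]] m show ?thesis
      by (meson ereal_less_eq(3) order_trans)
  qed
  with \<open>C1 > 0\<close> \<open>C2 > 0\<close> show ?thesis
    by blast
qed

end
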